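(* Let $G$ be a connected multi-ended graph on $X$ and let $C$ be a cut. Let $a$ and $b$ be the numbers of finite and infinite connected components of the induced subgraph $G|_C$, respectively. Then $a+b\le|\delta C|$, and in fact $$a<|\delta C|\quad\text{and}\quad 1\le b\le\frac{|\delta C|-a}{k_0}.$$ In particular, every thin cut is connected, and hence every thin cut is neat.
   Context: A graph on $X$ is an irreflexive symmetric relation $G\subseteq X^2$. For $A\subseteq X$, $\delta A$ is the set of edges with one endpoint in $A$ and the other in $X\setminus A$. A cut is a set $A\subseteq X$ with $A$ and $X\setminus A$ infinite and $\delta A$ finite; $G$ is multi-ended if it has a cut. $k_0:=\min\{|\delta A|: A$ a cut$\}$, and a cut $A$ is thin if $|\delta A|=k_0$. A set $A$ is connected if the induced subgraph $G|_A$ is connected; a cut $A$ is neat if both $A$ and $X\setminus A$ are connected. *)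

theory Defs
  imports Complex_Main
begin

definition is_graph :: "'a set \<Rightarrow> ('a \<times> 'a) set \<Rightarrow> bool" where
  "is_graph X G \<longleftrightarrow> G \<subseteq> X \<times> X \<and> irrefl G \<and> sym G"

text \<open>Edge boundary: each unordered edge {x,y} with x in A, y in X - A is counted once,
  as the ordered pair (x,y).\<close>
definition boundary :: "'a set \<Rightarrow> ('a \<times> 'a) set \<Rightarrow> 'a set \<Rightarrow> ('a \<times> 'a) set" where
  "boundary X G A = {(x, y) \<in> G. x \<in> A \<and> y \<in> X - A}"

definition is_cut :: "'a set \<Rightarrow> ('a \<times> 'a) set \<Rightarrow> 'a set \<Rightarrow> bool" where
  "is_cut X G A \<longleftrightarrow> A \<subseteq> X \<and> infinite A \<and> infinite (X - A) \<and> finite (boundary X G A)"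

definition multi_ended :: "'a set \<Rightarrow> ('a \<times> 'a) set \<Rightarrow> bool" where
  "multi_ended X G \<longleftrightarrow> (\<exists>A. is_cut X G A)"

definition k0 :: "'a set \<Rightarrow> ('a \<times> 'a) set \<Rightarrow> nat" where
  "k0 X G = (LEAST n. \<exists>A. is_cut X G A \<and> card (boundary X G A) = n)"

definition thin_cut :: "'a set \<Rightarrow> ('a \<times> 'a) set \<Rightarrow> 'a set \<Rightarrow> bool" where
  "thin_cut X G A \<longleftrightarrow> is_cut X G A \<and> card (boundary X G A) = k0 X G"

definition induced :: "('a \<times> 'a) set \<Rightarrow> 'a set \<Rightarrow> ('a \<times> 'a) set" where
  "induced G A = G \<inter> (A \<times> A)"

definition connected_set :: "('a \<times> 'a) set \<Rightarrow> 'a set \<Rightarrow> bool" where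
  "connected_set G A \<longleftrightarrow> (\<forall>x\<in>A. \<forall>y\<in>A. (x, y) \<in> (induced G A)\<^sup>*)"

definition neat_cut :: "'a set \<Rightarrow> ('a \<times> 'a) set \<Rightarrow> 'a set \<Rightarrow> bool" where
  "neat_cut X G A \<longleftrightarrow> is_cut X G A \<and> connected_set G A \<and> connected_set G (X - A)"

definition components :: "('a \<times> 'a) set \<Rightarrow> 'a set \<Rightarrow> 'a set set" where
  "components G A = (\<lambda>x. {y \<in> A. (x, y) \<in> (induced G A)\<^sup>*}) ` A"

end

theory Submission
  imports Defs
begin

text \<open>The boundary of a component K of G|_C is the part of \<delta>C whose edges start in K, and by
  connectedness of G it is nonempty. These parts are disjoint subsets of \<delta>C, so
  every finite component costs at least one boundary edge, while an infinite component is itself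
  a cut and costs at least k0 edges. Since C is infinite and has finitely many components, one of
  them is infinite. For a thin cut this forces a single infinite component and no finite one; as
  X - C is thin as well, both sides are connected.\<close>

lemma rtrancl_exits_set:
  assumes "(x, w) \<in> R\<^sup>*" "x \<in> S" "w \<notin> S"
  shows "\<exists>u v. (u, v) \<in> R \<and> u \<in> S \<and> v \<notin> S"
proof -
  have "w \<in> S \<or> (\<exists>u v. (u, v) \<in> R \<and> u \<in> S \<and> v \<notin> S)"
    using assms(1) by (induction rule: rtrancl_induct) (use assms(2) in blast)+
  then show ?thesis using assms(3) by blast
qed

lemma boundary_nonempty_if_connected:
  assumes "connected_set G X" "x \<in> A" "A \<subseteq> X" "w \<in> X - A"
  shows "boundary X G A \<noteq> {}"
proof -
  have "(x, w) \<in> (induced G X)\<^sup>*"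
    using assms unfolding connected_set_def by auto
  then obtain u v where "(u, v) \<in> induced G X" "u \<in> A" "v \<notin> A"
    using rtrancl_exits_set assms(2,4) by (metis DiffD2)
  then show ?thesis unfolding boundary_def induced_def by blast
qed

lemma k0_le_card_boundary:
  assumes "is_cut X G A"
  shows "k0 X G \<le> card (boundary X G A)"
  unfolding k0_def using assms by (intro Least_le) blast

lemma k0_attained:
  assumes "multi_ended X G"
  shows "\<exists>A. is_cut X G A \<and> card (boundary X G A) = k0 X G"
proof -
  from assms obtain C where "is_cut X G C" unfolding multi_ended_def by blast
  show ?thesis
    unfolding k0_def by (rule LeastI_ex) (use \<open>is_cut X G C\<close> in blast)
qed

lemma k0_pos:
  assumes "connected_set G X" "multi_ended X G"
  shows "0 < k0 X G"
proof -
  obtain A where A: "is_cut X G A" "card (boundary X G A) = k0 X G"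
    using k0_attained[OF assms(2)] by blast
  then obtain x w where "x \<in> A" "w \<in> X - A" "A \<subseteq> X"
    unfolding is_cut_def by (metis ex_in_conv finite.emptyI)
  then have "boundary X G A \<noteq> {}"
    using boundary_nonempty_if_connected[OF assms(1)] by blast
  with A show ?thesis unfolding is_cut_def by (metis card_gt_0_iff)
qed

lemma boundary_Diff:
  assumes "sym G" "G \<subseteq> X \<times> X" "A \<subseteq> X"
  shows "boundary X G (X - A) = prod.swap ` boundary X G A"
  using assms unfolding boundary_def sym_def by (auto simp: image_iff)

lemma card_boundary_Diff:
  assumes "sym G" "G \<subseteq> X \<times> X" "A \<subseteq> X"
  shows "card (boundary X G (X - A)) = card (boundary X G A)"
  by (simp add: boundary_Diff[OF assms] card_image)

lemma is_cut_Diff: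
  assumes "sym G" "G \<subseteq> X \<times> X" "is_cut X G A"
  shows "is_cut X G (X - A)"
proof -
  have "A \<subseteq> X" "X - (X - A) = A" using assms(3) unfolding is_cut_def by auto
  then show ?thesis
    using assms boundary_Diff[OF assms(1,2)] unfolding is_cut_def by auto
qed

lemma thin_cut_Diff:
  assumes "sym G" "G \<subseteq> X \<times> X" "thin_cut X G A"
  shows "thin_cut X G (X - A)"
proof -
  have "is_cut X G A" "card (boundary X G A) = k0 X G"
    using assms(3) unfolding thin_cut_def by simp_all
  moreover have "A \<subseteq> X" using \<open>is_cut X G A\<close> unfolding is_cut_def by simp
  ultimately show ?thesis
    using is_cut_Diff[OF assms(1,2)] card_boundary_Diff[OF assms(1,2)]
    unfolding thin_cut_def by simp
qed

definition component :: "('a \<times> 'a) set \<Rightarrow> 'a set \<Rightarrow> 'a \<Rightarrow> 'a set" where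
  "component G A x = {y \<in> A. (x, y) \<in> (induced G A)\<^sup>*}"

lemma components_eq_component_image: "components G A = component G A ` A"
  unfolding components_def component_def ..

lemma component_subset: "component G A x \<subseteq> A"
  unfolding component_def by auto

lemma self_in_component: "x \<in> A \<Longrightarrow> x \<in> component G A x"
  unfolding component_def by simp

lemma component_eq:
  assumes "sym G" "y \<in> component G A x"
  shows "component G A y = component G A x"
proof -
  have "sym (induced G A)" using assms(1) unfolding induced_def sym_def by blast
  then have "sym ((induced G A)\<^sup>*)" by (rule sym_rtrancl)
  moreover have "(x, y) \<in> (induced G A)\<^sup>*" using assms(2) unfolding component_def by simp
  ultimately show ?thesis
    unfolding component_def sym_def by (blast intro: rtrancl_trans)
qed

lemma component_closed:
  assumes "u \<in> component G A x" "(u, v) \<in> G" "v \<in> A"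
  shows "v \<in> component G A x"
proof -
  have "u \<in> A" using assms(1) component_subset[of G A x] by blast
  then have "(u, v) \<in> induced G A" using assms(2,3) unfolding induced_def by blast
  moreover have "(x, u) \<in> (induced G A)\<^sup>*" using assms(1) unfolding component_def by simp
  ultimately show ?thesis
    using assms(3) unfolding component_def by (simp add: rtrancl.rtrancl_into_rtrancl)
qed

lemma components_disjoint:
  assumes "sym G" "K \<in> components G A" "L \<in> components G A" "K \<noteq> L"
  shows "K \<inter> L = {}"
proof (rule ccontr)
  assume "K \<inter> L \<noteq> {}"
  then obtain z where "z \<in> K" "z \<in> L" by blast
  moreover obtain x y where "K = component G A x" "L = component G A y"
    using assms(2,3) unfolding components_eq_component_image by blast
  ultimately have "component G A z = K" "component G A z = L"
    using component_eq[OF assms(1)] by blast+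
  with assms(4) show False by simp
qed

lemma Union_components: "\<Union>(components G A) = A"
  unfolding components_def by blast

lemma boundary_component:
  assumes "K \<in> components G C"
  shows "boundary X G K = {e \<in> boundary X G C. fst e \<in> K}"
proof -
  obtain x where K: "K = component G C x"
    using assms unfolding components_eq_component_image by blast
  have "K \<subseteq> C" unfolding K by (rule component_subset)
  moreover have "v \<in> K" if "u \<in> K" "(u, v) \<in> G" "v \<in> C" for u v
    using that component_closed[of u G C x v] unfolding K by blast
  ultimately show ?thesis unfolding boundary_def by auto
qed

context
  fixes X :: "'a set" and G :: "('a \<times> 'a) set" and C :: "'a set"
  assumes graph: "is_graph X G" and connected: "connected_set G X" and cut: "is_cut X G C"
begin

lemma boundary_component_nonempty:
  assumes "K \<in> components G C"
  shows "boundary X G K \<noteq> {}"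
proof -
  obtain x where "x \<in> C" "K = component G C x"
    using assms unfolding components_eq_component_image by blast
  then have "x \<in> K" "K \<subseteq> C" using self_in_component[of x C G] component_subset[of G C x] by simp_all
  moreover have "C \<subseteq> X" "infinite (X - C)" using cut unfolding is_cut_def by simp_all
  moreover obtain w where "w \<in> X - C" using \<open>infinite (X - C)\<close> by (metis ex_in_conv finite.emptyI)
  ultimately show ?thesis
    using boundary_nonempty_if_connected[OF connected, of x K w] by blast
qed

lemma finite_boundary_component:
  assumes "K \<in> components G C"
  shows "finite (boundary X G K)"
  using cut unfolding boundary_component[OF assms] is_cut_def by simp

lemma finite_components: "finite (components G C)"
proof -
  have "components G C \<subseteq> (\<lambda>e. component G C (fst e)) ` boundary X G C"
  proof
    fix K assume K: "K \<in> components G C"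
    then obtain e where "e \<in> boundary X G K" using boundary_component_nonempty by blast
    then have e: "fst e \<in> K" "e \<in> boundary X G C" unfolding boundary_component[OF K] by simp_all
    obtain x where "K = component G C x"
      using K unfolding components_eq_component_image by blast
    moreover have "sym G" using graph unfolding is_graph_def by simp
    ultimately have "K = component G C (fst e)" using e(1) component_eq by metis
    then show "K \<in> (\<lambda>e. component G C (fst e)) ` boundary X G C" using e(2) by blast
  qed
  moreover have "finite (boundary X G C)" using cut unfolding is_cut_def by simp
  ultimately show ?thesis using finite_surj by blast
qed

lemma sum_card_boundary_components:
  "(\<Sum>K\<in>components G C. card (boundary X G K)) \<le> card (boundary X G C)"
proof -
  have sym: "sym G" using graph unfolding is_graph_def by simp
  have disjoint: "boundary X G K \<inter> boundary X G L = {}"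
    if "K \<in> components G C" "L \<in> components G C" "K \<noteq> L" for K L
    using components_disjoint[OF sym that]
    unfolding boundary_component[OF that(1)] boundary_component[OF that(2)] by blast
  have "(\<Sum>K\<in>components G C. card (boundary X G K)) = card (\<Union>K\<in>components G C. boundary X G K)"
    using disjoint finite_boundary_component
    by (intro card_UN_disjoint[symmetric] finite_components) auto
  also have "\<dots> \<le> card (boundary X G C)"
  proof (intro card_mono UN_least)
    show "finite (boundary X G C)" using cut unfolding is_cut_def by simp
    show "boundary X G K \<subseteq> boundary X G C" if "K \<in> components G C" for K
      unfolding boundary_component[OF that] by blast
  qed
  finally show ?thesis .
qed

lemma infinite_component_is_cut:
  assumes "K \<in> components G C" "infinite K"
  shows "is_cut X G K"
proof -
  have "K \<subseteq> C" using assms(1) Union_components[of G C] by blast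
  then have "K \<subseteq> X" "infinite (X - K)"
    using cut unfolding is_cut_def by (auto intro: finite_subset[of "X - C" "X - K"])
  then show ?thesis
    using assms(2) finite_boundary_component[OF assms(1)] unfolding is_cut_def by simp
qed

lemma card_components_weighted_le:
  "card {K \<in> components G C. finite K} + card {K \<in> components G C. infinite K} * k0 X G
     \<le> card (boundary X G C)"
  (is "card ?F + card ?I * _ \<le> _")
proof -
  let ?\<delta> = "\<lambda>K. card (boundary X G K)"
  have "card ?F = (\<Sum>K\<in>?F. 1)" by simp
  also have "\<dots> \<le> (\<Sum>K\<in>?F. ?\<delta> K)"
  proof (rule sum_mono)
    fix K assume "K \<in> ?F"
    then have "boundary X G K \<noteq> {}" "finite (boundary X G K)"
      using boundary_component_nonempty finite_boundary_component by simp_all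
    then show "1 \<le> ?\<delta> K" by (simp add: Suc_le_eq card_gt_0_iff)
  qed
  finally have F: "card ?F \<le> (\<Sum>K\<in>?F. ?\<delta> K)" .
  have "card ?I * k0 X G = (\<Sum>K\<in>?I. k0 X G)" by simp
  also have "\<dots> \<le> (\<Sum>K\<in>?I. ?\<delta> K)"
    using infinite_component_is_cut k0_le_card_boundary by (intro sum_mono) blast
  finally have I: "card ?I * k0 X G \<le> (\<Sum>K\<in>?I. ?\<delta> K)" .
  have "(\<Sum>K\<in>?F. ?\<delta> K) + (\<Sum>K\<in>?I. ?\<delta> K) = (\<Sum>K\<in>?F \<union> ?I. ?\<delta> K)"
    using finite_components by (intro sum.union_disjoint[symmetric]) auto
  also have "\<dots> = (\<Sum>K\<in>components G C. ?\<delta> K)" by (rule sum.cong) auto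
  also have "\<dots> \<le> card (boundary X G C)" by (rule sum_card_boundary_components)
  finally show ?thesis using F I by linarith
qed

lemma exists_infinite_component: "1 \<le> card {K \<in> components G C. infinite K}"
proof -
  have "infinite (\<Union>(components G C))" using cut unfolding Union_components is_cut_def by simp
  then have "{K \<in> components G C. infinite K} \<noteq> {}" using finite_components by blast
  then show ?thesis using finite_components by (simp add: Suc_le_eq card_gt_0_iff)
qed

end

lemma connected_set_if_components_singleton:
  assumes "components G A = {K}"
  shows "connected_set G A"
  unfolding connected_set_def
proof (intro ballI)
  fix x y assume "x \<in> A" "y \<in> A"
  then have "component G A x = K" "component G A y = K"
    using assms unfolding components_eq_component_image by blast+
  then have "y \<in> component G A x" using self_in_component[OF \<open>y \<in> A\<close>, of G] by simp
  then show "(x, y) \<in> (induced G A)\<^sup>*" unfolding component_def by simp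
qed

lemma thin_cut_connected:
  assumes graph: "is_graph X G" and "connected_set G X" and thin: "thin_cut X G A"
  shows "connected_set G A"
proof -
  let ?F = "{K \<in> components G A. finite K}" and ?I = "{K \<in> components G A. infinite K}"
  have cut: "is_cut X G A" and card: "card (boundary X G A) = k0 X G"
    using thin unfolding thin_cut_def by auto
  have k0: "0 < k0 X G"
    using k0_pos assms cut unfolding multi_ended_def by blast
  note count = card_components_weighted_le[OF graph assms(2) cut]
    and I = exists_infinite_component[OF graph assms(2) cut]
    and fin = finite_components[OF graph assms(2) cut]
  have "k0 X G \<le> card ?I * k0 X G" using I by simp
  then have "card ?F = 0" using count card by linarith
  moreover have "card ?I = 1"
  proof (rule ccontr)
    assume "card ?I \<noteq> 1"
    then have "2 * k0 X G \<le> card ?I * k0 X G" using I by (intro mult_right_mono) auto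
    then show False using count card k0 by linarith
  qed
  ultimately have "components G A = ?I" "card ?I = 1" using fin by auto
  then obtain K where "components G A = {K}" by (metis card_1_singletonE)
  then show ?thesis by (rule connected_set_if_components_singleton)
qed

lemma thin_cut_neat:
  assumes graph: "is_graph X G" and "connected_set G X" and thin: "thin_cut X G A"
  shows "neat_cut X G A"
proof -
  have "thin_cut X G (X - A)"
    using thin_cut_Diff graph thin unfolding is_graph_def by blast
  then show ?thesis
    using thin_cut_connected[OF graph assms(2)] thin unfolding neat_cut_def thin_cut_def by blast
qed

theorem mainTheorem14:
  fixes X :: "'a set" and G :: "('a \<times> 'a) set" and C :: "'a set"
  assumes "is_graph X G"
    and "connected_set G X"
    and "multi_ended X G"
    and "is_cut X G C"
  defines "a \<equiv> card {K \<in> components G C. finite K}"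
    and "b \<equiv> card {K \<in> components G C. infinite K}"
  shows "finite {K \<in> components G C. finite K}
      \<and> finite {K \<in> components G C. infinite K}
      \<and> a + b \<le> card (boundary X G C)
      \<and> a < card (boundary X G C)
      \<and> 1 \<le> b
      \<and> real b \<le> (real (card (boundary X G C)) - real a) / real (k0 X G)
      \<and> (\<forall>A. thin_cut X G A \<longrightarrow> connected_set G A)
      \<and> (\<forall>A. thin_cut X G A \<longrightarrow> neat_cut X G A)"
proof -
  have k0: "0 < k0 X G" using k0_pos assms(2,3) .
  have fin: "finite (components G C)" using finite_components assms(1,2,4) .
  have count: "a + b * k0 X G \<le> card (boundary X G C)" and b_pos: "1 \<le> b"
    using card_components_weighted_le exists_infinite_component assms(1,2,4)
    unfolding a_def b_def by blast+
  have "a + b \<le> card (boundary X G C)"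
    using count k0 mult_le_mono2[of 1 "k0 X G" b] by linarith
  moreover have "real b \<le> (real (card (boundary X G C)) - real a) / real (k0 X G)"
    using count k0 by (simp add: field_simps flip: of_nat_add of_nat_mult)
  ultimately show ?thesis
    using fin b_pos thin_cut_connected[OF assms(1,2)] thin_cut_neat[OF assms(1,2)] by auto
qed

end
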